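(* Let $d>0$, $N\ge 1$, let $\mathcal{S}=\{s_1,s_2,s_3,s_4\}$ be the 4-PAM constellation with $s_1=-3d$, $s_2=-d$, $s_3=d$, $s_4=3d$, labeled by any Gray labeling. For any two distinct sequences $\boldsymbol{x},\hat{\boldsymbol{x}}\in\mathcal{S}^N$, the asymptotic loss satisfies $\mathsf{L}(\boldsymbol{x},\hat{\boldsymbol{x}})\le 1.25$ dB.
   Context: A labeling is a bijection $\Phi_{\mathcal{S}}:\{0,1\}^2\to\mathcal{S}$, described by $\boldsymbol{q}=[q_1,q_2,q_3,q_4]$, where $q_i$ is the integer whose two-bit binary representation (most significant bit first) is $\Phi_{\mathcal{S}}^{-1}(s_i)$. The Gray labelings are $[0,1,3,2]$, $[0,2,3,1]$, $[1,0,2,3]$, $[2,0,1,3]$. For $\boldsymbol{x}=[x[1],\dots,x[N]]$, $\hat{\boldsymbol{x}}=[\hat{x}[1],\dots,\hat{x}[N]]\in\mathcal{S}^N$ and each $k$ with $x[k]\neq\hat{x}[k]$, define $\mu^{\mathcal{X}}_k=\sigma^{2,\mathcal{X}}_k=(x[k]-\hat{x}[k])^2/(4d^2)$ (so equal to 1, 4 or 9), and define $\mu^{\mathcal{B}}_k=\sigma^{2,\mathcal{B}}_k=(x[k]-\hat{x}[k])^2/(4d^2)$ except when $\{x[k],\hat{x}[k]\}=\{s_1,s_4\}$, in which case $\mu^{\mathcal{B}}_k=3$ and $\sigma^{2,\mathcal{B}}_k=1$. With sums over all $k$ such that $x[k]\neq\hat{x}[k]$, the normalized distances are $a^{\mathcal{X}}(\boldsymbol{x},\hat{\boldsymbol{x}})=\sum_k\mu^{\mathcal{X}}_k/\sqrt{\sum_k\sigma^{2,\mathcal{X}}_k}$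 (symbol-wise ML decoder) and $a^{\mathcal{B}}(\boldsymbol{x},\hat{\boldsymbol{x}})=\sum_k\mu^{\mathcal{B}}_k/\sqrt{\sum_k\sigma^{2,\mathcal{B}}_k}$ (bit-wise max-log decoder under the zero-crossing Gaussian approximation of the L-values), and the asymptotic loss (in dB) of the bit-wise decoder relative to the symbol-wise decoder is $\mathsf{L}(\boldsymbol{x},\hat{\boldsymbol{x}})=20\log_{10}\big(a^{\mathcal{X}}(\boldsymbol{x},\hat{\boldsymbol{x}})/a^{\mathcal{B}}(\boldsymbol{x},\hat{\boldsymbol{x}})\big)$. (The pairwise error probabilities are $Q(a\,d/\sigma_z)$ with $a$ the respective normalized distance.) *)

theory Defs
  imports Complex_Main
begin

definition pam_s :: "real \<Rightarrow> nat \<Rightarrow> real" where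
  "pam_s d i = (if i = 1 then -3*d else if i = 2 then -d else if i = 3 then d else 3*d)"

definition pam4 :: "real \<Rightarrow> real set" where
  "pam4 d = {pam_s d 1, pam_s d 2, pam_s d 3, pam_s d 4}"

text \<open>Labelings given by q = [q_1,q_2,q_3,q_4]; the Gray labelings.\<close>
definition gray_labelings :: "nat list set" where
  "gray_labelings = {[0,1,3,2], [0,2,3,1], [1,0,2,3], [2,0,1,3]}"

definition mu_X :: "real \<Rightarrow> real \<Rightarrow> real \<Rightarrow> real" where
  "mu_X d a b = (a - b)^2 / (4 * d^2)"

definition sigma2_X :: "real \<Rightarrow> real \<Rightarrow> real \<Rightarrow> real" where
  "sigma2_X d a b = (a - b)^2 / (4 * d^2)"

definition mu_B :: "real \<Rightarrow> real \<Rightarrow> real \<Rightarrow> real" where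
  "mu_B d a b = (if {a, b} = {pam_s d 1, pam_s d 4} then 3 else (a - b)^2 / (4 * d^2))"

definition sigma2_B :: "real \<Rightarrow> real \<Rightarrow> real \<Rightarrow> real" where
  "sigma2_B d a b = (if {a, b} = {pam_s d 1, pam_s d 4} then 1 else (a - b)^2 / (4 * d^2))"

definition diff_idx :: "nat \<Rightarrow> (nat \<Rightarrow> real) \<Rightarrow> (nat \<Rightarrow> real) \<Rightarrow> nat set" where
  "diff_idx N x xh = {k \<in> {1..N}. x k \<noteq> xh k}"

definition a_X :: "real \<Rightarrow> nat \<Rightarrow> (nat \<Rightarrow> real) \<Rightarrow> (nat \<Rightarrow> real) \<Rightarrow> real" where
  "a_X d N x xh = (\<Sum>k\<in>diff_idx N x xh. mu_X d (x k) (xh k))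
                   / sqrt (\<Sum>k\<in>diff_idx N x xh. sigma2_X d (x k) (xh k))"

definition a_B :: "real \<Rightarrow> nat \<Rightarrow> (nat \<Rightarrow> real) \<Rightarrow> (nat \<Rightarrow> real) \<Rightarrow> real" where
  "a_B d N x xh = (\<Sum>k\<in>diff_idx N x xh. mu_B d (x k) (xh k))
                   / sqrt (\<Sum>k\<in>diff_idx N x xh. sigma2_B d (x k) (xh k))"

definition asym_loss :: "real \<Rightarrow> nat \<Rightarrow> (nat \<Rightarrow> real) \<Rightarrow> (nat \<Rightarrow> real) \<Rightarrow> real" where
  "asym_loss d N x xh = 20 * log 10 (a_X d N x xh / a_B d N x xh)"

end

theory Submission
  imports Defs
begin

text \<open>At a differing position the bit-wise metrics differ from the symbol-wise ones only for the
  outer pair {s1, s4}. With S the sum of the sigma2_B and E the number of outer pairs, the sums of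
  mu_X and of sigma2_X are both S + 8E and the sum of mu_B is S + 2E, so
  (a_X / a_B)^2 = (S + 8E) S / (S + 2E)^2. This is at most 4/3 because
  4 (S + 2E)^2 - 3 (S + 8E) S = (S - 4E)^2, and 10 log10 (4/3) < 1.25 since (4/3)^8 < 10.\<close>

definition pam_outer_pair :: "real \<Rightarrow> real \<Rightarrow> real \<Rightarrow> bool" where
  "pam_outer_pair d a b \<longleftrightarrow> {a, b} = {pam_s d 1, pam_s d 4}"

lemma mu_B_eq_sigma2_B_plus_outer:
  "mu_B d a b = sigma2_B d a b + 2 * of_bool (pam_outer_pair d a b)"
  by (simp add: mu_B_def sigma2_B_def pam_outer_pair_def)

lemma mu_X_eq_sigma2_B_plus_outer:
  assumes "d \<noteq> 0"
  shows "mu_X d a b = sigma2_B d a b + 8 * of_bool (pam_outer_pair d a b)"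
  using assms
  by (auto simp: mu_X_def sigma2_B_def pam_outer_pair_def pam_s_def doubleton_eq_iff
      power2_eq_square field_simps)

lemma sigma2_B_ge_one:
  assumes "d > 0" "a \<in> pam4 d" "b \<in> pam4 d" "a \<noteq> b"
  shows "1 \<le> sigma2_B d a b"
  using assms
  by (auto simp: pam4_def pam_s_def sigma2_B_def doubleton_eq_iff power2_eq_square field_simps)

lemma ratio_le_four_thirds:
  fixes S E :: real
  shows "(S + 8 * E) * S / (S + 2 * E)^2 \<le> 4 / 3"
proof (cases "S + 2 * E = 0")
  case False
  have "4 * (S + 2 * E)^2 - 3 * ((S + 8 * E) * S) = (S - 4 * E)^2"
    by (simp add: power2_eq_square algebra_simps)
  then have "3 * ((S + 8 * E) * S) \<le> 4 * (S + 2 * E)^2"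
    by (metis diff_ge_0_iff_ge zero_le_power2)
  with False show ?thesis
    by (simp add: field_simps)
qed simp

lemma dB_of_sqrt_le:
  fixes Q :: real
  assumes "0 < Q" "Q \<le> 4 / 3"
  shows "20 * log 10 (sqrt Q) \<le> 1.25"
proof -
  have "Q^8 \<le> (4 / 3)^8"
    using assms by (intro power_mono) auto
  also have "\<dots> < 10"
    by (simp add: power_divide)
  finally have "log 10 (Q^8) < log 10 10"
    using assms by (subst log_less_cancel_iff) auto
  then have "8 * log 10 Q < 1"
    using assms by (simp add: log_nat_power)
  moreover have "log 10 (sqrt Q) = log 10 Q / 2"
    using assms by (simp add: sqrt_def log_root)
  ultimately show ?thesis
    by simp
qed

lemma a_X_div_a_B_eq_sqrt:
  assumes "d > 0" and "D = diff_idx N x xh" and "D \<noteq> {}"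
    and "\<forall>k\<in>D. x k \<in> pam4 d \<and> xh k \<in> pam4 d"
  defines "S \<equiv> \<Sum>k\<in>D. sigma2_B d (x k) (xh k)"
    and "E \<equiv> \<Sum>k\<in>D. of_bool (pam_outer_pair d (x k) (xh k)) :: real"
  shows "0 < S" and "0 \<le> E"
    and "a_X d N x xh / a_B d N x xh = sqrt ((S + 8 * E) * S / (S + 2 * E)^2)"
proof -
  have "finite D"
    using assms(2) by (simp add: diff_idx_def)
  have one_le: "1 \<le> sigma2_B d (x k) (xh k)" if "k \<in> D" for k
    using sigma2_B_ge_one assms(1,2,4) that by (auto simp: diff_idx_def)
  show S_pos: "0 < S"
    unfolding S_def using \<open>finite D\<close> assms(3) one_le
    by (intro sum_pos) (auto intro: less_le_trans[OF zero_less_one])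
  show E_nonneg: "0 \<le> E"
    unfolding E_def by (simp add: sum_nonneg)
  have sum_mu_X: "(\<Sum>k\<in>D. mu_X d (x k) (xh k)) = S + 8 * E"
    using assms(1) by (simp add: mu_X_eq_sigma2_B_plus_outer S_def E_def sum.distrib sum_distrib_left)
  then have sum_sigma2_X: "(\<Sum>k\<in>D. sigma2_X d (x k) (xh k)) = S + 8 * E"
    by (simp add: mu_X_def sigma2_X_def)
  have sum_mu_B: "(\<Sum>k\<in>D. mu_B d (x k) (xh k)) = S + 2 * E"
    by (simp add: mu_B_eq_sigma2_B_plus_outer S_def E_def sum.distrib sum_distrib_left)
  have "a_X d N x xh = sqrt (S + 8 * E)"
    using S_pos E_nonneg
    by (simp add: a_X_def assms(2)[symmetric] sum_mu_X sum_sigma2_X real_div_sqrt)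
  moreover have "a_B d N x xh = (S + 2 * E) / sqrt S"
    by (simp add: a_B_def assms(2)[symmetric] sum_mu_B S_def)
  ultimately show "a_X d N x xh / a_B d N x xh = sqrt ((S + 8 * E) * S / (S + 2 * E)^2)"
    using S_pos E_nonneg by (simp add: real_sqrt_divide real_sqrt_mult)
qed

theorem theorem1:
  fixes d :: real and N :: nat and q :: "nat list" and x xh :: "nat \<Rightarrow> real"
  assumes "d > 0" and "N \<ge> 1"
    and "q \<in> gray_labelings"
    and "\<forall>k\<in>{1..N}. x k \<in> pam4 d"
    and "\<forall>k\<in>{1..N}. xh k \<in> pam4 d"
    and "\<exists>k\<in>{1..N}. x k \<noteq> xh k"
  shows "asym_loss d N x xh \<le> 1.25"
proof -
  define D where "D = diff_idx N x xh"
  have "D \<noteq> {}" and "\<forall>k\<in>D. x k \<in> pam4 d \<and> xh k \<in> pam4 d"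
    using assms(4-6) by (auto simp: D_def diff_idx_def)
  note ratio = a_X_div_a_B_eq_sqrt[OF assms(1) D_def this]
  let ?Q = "\<lambda>S E. (S + 8 * E) * S / (S + 2 * E)^2 :: real"
  obtain S E where "0 < S" "0 \<le> E" and "a_X d N x xh / a_B d N x xh = sqrt (?Q S E)"
    using ratio by blast
  moreover from \<open>0 < S\<close> \<open>0 \<le> E\<close> have "0 < ?Q S E"
    by simp
  ultimately show ?thesis
    unfolding asym_loss_def using dB_of_sqrt_le ratio_le_four_thirds by simp
qed

end
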